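(* Let $n\ge 3$ and let $\Gamma(D_{2n})$ be the incidence system defined in the context. If $n>3$, then $\Gamma(D_{2n})$ is an incidence geometric representation for the dihedral group $D_{2n}$ of order $2n$. If $n=3$, then $\Gamma(D_6)$ is a weak incidence geometric representation for $D_6$.
   Context: An incidence system is a quadruple $\Gamma=(X,*,t,I)$ where $X$ is a set of elements, $I$ a finite set of types, $t:X\to I$ a surjective type function, and $*$ a symmetric binary relation on $X$ (incidence) such that no two elements of the same type are incident. A correlation of $\Gamma$ is a permutation $\alpha$ of $X$ such that for all $x,y\in X$: $t(x)=t(y)\iff t(\alpha(x))=t(\alpha(y))$, and $x*y\iff \alpha(x)*\alpha(y)$. The correlations form a group $\mathrm{Aut}(\Gamma)$; its normal subgroup of correlations with $t(\alpha(x))=t(x)$ for all $x$ is denoted $\mathrm{Aut}_I(\Gamma)$. For groups $H\le K$, an incidence geometric representation for the pair $(H,K)$ is an incidence system $\Gamma$ together with isomorphisms $\varphi_1:H\to\mathrm{Aut}_I(\Gamma)$ and $\varphi_2:K\to\mathrm{Aut}(\Gamma)$ such that $\varphi_2|_H=\varphi_1$ (with $\mathrm{Aut}_I(\Gamma)\subseteq \mathrm{Aut}(\Gamma)$ the inclusion). An incidence geometric representation for a group $G$ is one for the pair $(\mathrm{Inn}(G),\mathrm{Aut}(G))$. If $\varphi_1,\varphi_2$ are only required to be injective homomorphisms (with the same compatibility), the representation is called weak. Construction of $\Gamma(D_{2n})$. Identify the vertex set $V$ of the $n$-gon with $\mathbb{Z}_n$. Let $\tau(n)=\{k: 1\le k\le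 n-1,\ \gcd(k,n)=1\}$, and for $k\in\tau(n)$ let $E_k=\{\{x,x+k\}: x\in\mathbb{Z}_n\}$ (so $E_k=E_{n-k}$). Let $\bar\tau(n)=\{k\in\tau(n): k<n-k\}$ (one representative of each pair $\{k,n-k\}$). If $n$ is odd: the elements are $V\sqcup\bigsqcup_{k\in\bar\tau(n)}E_k$, the type set is $\{0\}\cup\bar\tau(n)$, vertices have type $0$ and elements of $E_k$ have type $k$; a vertex $v$ and an element $e\in E_k$ are incident iff $v\in e$; any $e\in E_i$ and $f\in E_j$ with $i\ne j$ are incident; there are no other incidences. If $n$ is even: let $V_0$ be the even residues and $V_{-1}$ the odd residues in $\mathbb{Z}_n$. The elements are $V_{-1}\sqcup V_0\sqcup\bigsqcup_{k\in\bar\tau(n)}E_k$, the type set is $\{-1,0\}\cup\bar\tau(n)$, elements of $V_{-1}$, $V_0$, $E_k$ have types $-1$, $0$, $k$ respectively; a vertex $v$ and $e\in E_k$ are incident iff $v\in e$; any $e\in E_i$, $f\in E_j$ with $i\neq j$ are incident; every element of $V_0$ is incident to every element of $V_{-1}$; there are no other incidences. *)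

theory Defs
  imports "HOL-Algebra.Algebra"
begin

definition incidence_system ::
  "'a set \<Rightarrow> ('a \<Rightarrow> 'a \<Rightarrow> bool) \<Rightarrow> ('a \<Rightarrow> 'i) \<Rightarrow> 'i set \<Rightarrow> bool" where
  "incidence_system S inc t I \<longleftrightarrow>
     finite I \<and> t ` S = I \<and>
     (\<forall>x\<in>S. \<forall>y\<in>S. inc x y \<longleftrightarrow> inc y x) \<and>
     (\<forall>x\<in>S. \<forall>y\<in>S. t x = t y \<longrightarrow> \<not> inc x y)"

definition correlations ::
  "'a set \<Rightarrow> ('a \<Rightarrow> 'a \<Rightarrow> bool) \<Rightarrow> ('a \<Rightarrow> 'i) \<Rightarrow> ('a \<Rightarrow> 'a) set" where
  "correlations S inc t =
     {\<alpha> \<in> Bij S. \<forall>x\<in>S. \<forall>y\<in>S.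
        (t x = t y \<longleftrightarrow> t (\<alpha> x) = t (\<alpha> y)) \<and> (inc x y \<longleftrightarrow> inc (\<alpha> x) (\<alpha> y))}"

definition CorrGroup ::
  "'a set \<Rightarrow> ('a \<Rightarrow> 'a \<Rightarrow> bool) \<Rightarrow> ('a \<Rightarrow> 'i) \<Rightarrow> ('a \<Rightarrow> 'a) monoid" where
  "CorrGroup S inc t = (BijGroup S) \<lparr>carrier := correlations S inc t\<rparr>"

definition TypePresGroup ::
  "'a set \<Rightarrow> ('a \<Rightarrow> 'a \<Rightarrow> bool) \<Rightarrow> ('a \<Rightarrow> 'i) \<Rightarrow> ('a \<Rightarrow> 'a) monoid" where
  "TypePresGroup S inc t =
     (BijGroup S) \<lparr>carrier := {\<alpha> \<in> correlations S inc t. \<forall>x\<in>S. t (\<alpha> x) = t x}\<rparr>"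

definition igr ::
  "('g, 'm) monoid_scheme \<Rightarrow> ('g, 'n) monoid_scheme \<Rightarrow>
   'a set \<Rightarrow> ('a \<Rightarrow> 'a \<Rightarrow> bool) \<Rightarrow> ('a \<Rightarrow> 'i) \<Rightarrow> 'i set \<Rightarrow> bool" where
  "igr H K S inc t I \<longleftrightarrow> incidence_system S inc t I \<and>
     (\<exists>\<phi>1 \<phi>2. \<phi>1 \<in> iso H (TypePresGroup S inc t) \<and> \<phi>2 \<in> iso K (CorrGroup S inc t) \<and>
              (\<forall>h\<in>carrier H. \<phi>2 h = \<phi>1 h))"

definition weak_igr ::
  "('g, 'm) monoid_scheme \<Rightarrow> ('g, 'n) monoid_scheme \<Rightarrow>
   'a set \<Rightarrow> ('a \<Rightarrow> 'a \<Rightarrow> bool) \<Rightarrow> ('a \<Rightarrow> 'i) \<Rightarrow> 'i set \<Rightarrow> bool" where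
  "weak_igr H K S inc t I \<longleftrightarrow> incidence_system S inc t I \<and>
     (\<exists>\<phi>1 \<phi>2. \<phi>1 \<in> hom H (TypePresGroup S inc t) \<and> inj_on \<phi>1 (carrier H) \<and>
              \<phi>2 \<in> hom K (CorrGroup S inc t) \<and> inj_on \<phi>2 (carrier K) \<and>
              (\<forall>h\<in>carrier H. \<phi>2 h = \<phi>1 h))"

definition inner_auts :: "('g, 'm) monoid_scheme \<Rightarrow> ('g \<Rightarrow> 'g) set" where
  "inner_auts G = {(\<lambda>x\<in>carrier G. g \<otimes>\<^bsub>G\<^esub> x \<otimes>\<^bsub>G\<^esub> inv\<^bsub>G\<^esub> g) | g. g \<in> carrier G}"

definition InnGroup :: "('g, 'm) monoid_scheme \<Rightarrow> ('g \<Rightarrow> 'g) monoid" where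
  "InnGroup G = BijGroup (carrier G) \<lparr>carrier := inner_auts G\<rparr>"

definition igr_group :: "('g, 'm) monoid_scheme \<Rightarrow>
   'a set \<Rightarrow> ('a \<Rightarrow> 'a \<Rightarrow> bool) \<Rightarrow> ('a \<Rightarrow> 'i) \<Rightarrow> 'i set \<Rightarrow> bool" where
  "igr_group G S inc t I \<longleftrightarrow> igr (InnGroup G) (AutoGroup G) S inc t I"

definition weak_igr_group :: "('g, 'm) monoid_scheme \<Rightarrow>
   'a set \<Rightarrow> ('a \<Rightarrow> 'a \<Rightarrow> bool) \<Rightarrow> ('a \<Rightarrow> 'i) \<Rightarrow> 'i set \<Rightarrow> bool" where
  "weak_igr_group G S inc t I \<longleftrightarrow> weak_igr (InnGroup G) (AutoGroup G) S inc t I"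

text \<open>Element (r, s) stands for the symmetry x \<mapsto> (if s then -x else x) + r of Z_n,
  i.e. rho^r sigma^s with rho the rotation and sigma a reflection.\<close>
definition dihedral :: "nat \<Rightarrow> (nat \<times> bool) monoid" where
  "dihedral n =
    \<lparr>carrier = {..<n} \<times> UNIV,
     monoid.mult = (\<lambda>(r1, s1) (r2, s2). ((r1 + (if s1 then n - r2 else r2)) mod n, s1 \<noteq> s2)),
     monoid.one = (0, False)\<rparr>"

definition tau :: "nat \<Rightarrow> nat set" where
  "tau n = {k. 1 \<le> k \<and> k \<le> n - 1 \<and> coprime k n}"

definition tau_bar :: "nat \<Rightarrow> nat set" where
  "tau_bar n = {k \<in> tau n. k < n - k}"

definition Eset :: "nat \<Rightarrow> nat \<Rightarrow> nat set set" where
  "Eset n k = {{x, (x + k) mod n} | x. x < n}"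

definition Dgam_elems :: "nat \<Rightarrow> (nat + nat \<times> nat set) set" where
  "Dgam_elems n = Inl ` {..<n} \<union> {Inr (k, e) | k e. k \<in> tau_bar n \<and> e \<in> Eset n k}"

definition Dgam_types :: "nat \<Rightarrow> int set" where
  "Dgam_types n = (if even n then {-1, 0} else {0}) \<union> int ` tau_bar n"

definition Dgam_type :: "nat \<Rightarrow> nat + nat \<times> nat set \<Rightarrow> int" where
  "Dgam_type n x = (case x of
       Inl v \<Rightarrow> (if even n \<and> odd v then -1 else 0)
     | Inr (k, e) \<Rightarrow> int k)"

definition Dgam_inc :: "nat \<Rightarrow> nat + nat \<times> nat set \<Rightarrow> nat + nat \<times> nat set \<Rightarrow> bool" where
  "Dgam_inc n x y = (case (x, y) of
       (Inl u, Inl v) \<Rightarrow> even n \<and> (even u \<noteq> even v)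
     | (Inl v, Inr (k, e)) \<Rightarrow> v \<in> e
     | (Inr (k, e), Inl v) \<Rightarrow> v \<in> e
     | (Inr (i, e), Inr (j, f)) \<Rightarrow> i \<noteq> j)"

end

theory Submission
  imports Defs "HOL-Number_Theory.Cong"
begin

(*
  Every automorphism of D_2n (n >= 3) has the form rho^r sigma^s |-> rho^(a r + s b) sigma^s with
  a a unit mod n. The affine map x |-> a x + b of Z_n acts on Gamma(D_2n) as a correlation (an edge
  {x, x + k} goes to {a x + b, a x + b + a k}, so E_k goes to E_(+-a k)), and this is compatible with
  composition. Hence Aut(D_2n) embeds into the correlation group, and inner automorphisms, which have
  a = +-1 and b = 2 r, land in the type-preserving correlations.

  For n > 3 both embeddings are onto. A correlation maps vertices to vertices: for even n a vertex
  has only n/2 elements of its type while an edge has n, and for odd n only edges are incident to all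
  elements of some other type. So it permutes Z_n, and since it maps the n-cycle E_1 onto some E_c,
  consecutive vertices go to vertices differing by +-c. The sign never changes, because two opposite
  steps would send x and x + 2 to the same vertex; hence the permutation is affine. For n = 3 the
  triangle is self-dual (vertices and edges can be swapped), so the correlation group is larger and
  only the embeddings are claimed.
*)

lemma mod_mult_mod_add:
  "(b + c * (x mod m)) mod m = (b + c * x) mod m"
  "(c * (x mod m) + b) mod m = (c * x + b) mod m" for m :: "'a::euclidean_semiring_cancel"
  by (metis mod_add_left_eq mod_add_right_eq mod_mult_right_eq)+

(* Products in dihedral n are computed on integer representatives, avoiding the truncated
   subtraction n - r in the definition of the group. *)
definition zres :: "nat \<Rightarrow> int \<Rightarrow> nat" where
  "zres n z = nat (z mod int n)"

lemma zres_less: "n > 0 \<Longrightarrow> zres n z < n"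
  by (simp add: zres_def nat_less_iff)

lemma of_nat_zres: "n > 0 \<Longrightarrow> int (zres n z) = z mod int n"
  by (simp add: zres_def)

lemma zres_of_nat [simp]: "zres n (int r) = r mod n"
  by (simp add: zres_def flip: of_nat_mod)

lemma Bij_if_inj_on_finite:
  assumes "finite A" "f \<in> extensional A" "f ` A \<subseteq> A" "inj_on f A"
  shows "f \<in> Bij A"
  using endo_inj_surj[OF assms(1,3,4)] assms(2,4) by (simp add: Bij_def bij_betw_def)

lemma hom_BijGroup_restrictI:
  assumes "f \<in> C \<rightarrow> D" "C \<subseteq> Bij S" "D \<subseteq> Bij T"
    and "\<And>x y. x \<in> C \<Longrightarrow> y \<in> C \<Longrightarrow> f (compose S x y) = compose T (f x) (f y)"
  shows "f \<in> hom (BijGroup S\<lparr>carrier := C\<rparr>) (BijGroup T\<lparr>carrier := D\<rparr>)"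
  unfolding hom_def using assms by (auto simp: BijGroup_def subset_iff)

lemma (in group) conjugation_in_auto:
  assumes g: "g \<in> carrier G"
  shows "(\<lambda>h\<in>carrier G. g \<otimes> h \<otimes> inv g) \<in> auto G"
proof -
  have cancel: "inv g \<otimes> (g \<otimes> h) = h" if "h \<in> carrier G" for h
    using g that by (simp flip: m_assoc)
  have "(\<lambda>h\<in>carrier G. g \<otimes> h \<otimes> inv g) \<in> hom G G"
    using g by (intro homI) (simp_all add: m_assoc cancel)
  then show ?thesis
    using conjugation_is_bij[OF g] by (simp add: auto_def Bij_def)
qed

definition pm_cong :: "'a::unique_euclidean_ring \<Rightarrow> 'a \<Rightarrow> 'a \<Rightarrow> bool" where
  "pm_cong m x y \<longleftrightarrow> [x = y] (mod m) \<or> [x = - y] (mod m)"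

lemma pm_cong_refl [simp]: "pm_cong m x x"
  by (simp add: pm_cong_def)

lemma pm_cong_sym:
  assumes "pm_cong m x y"
  shows "pm_cong m y x"
proof -
  have "[y = - x] (mod m)" if "[x = - y] (mod m)"
    using cong_uminus[OF that] by (simp add: cong_sym_eq)
  then show ?thesis
    using assms by (auto simp: pm_cong_def cong_sym_eq)
qed

lemma pm_cong_trans:
  assumes xy: "pm_cong m x y" and yz: "pm_cong m y z"
  shows "pm_cong m x z"
proof -
  from yz have "[y = z] (mod m) \<and> [- y = - z] (mod m) \<or> [y = - z] (mod m) \<and> [- y = z] (mod m)"
    unfolding pm_cong_def using cong_uminus by fastforce
  with xy show ?thesis
    unfolding pm_cong_def by (blast intro: cong_trans)
qed

lemma pm_cong_mult_left: "pm_cong m x y \<Longrightarrow> pm_cong m (c * x) (c * y)"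
  using cong_scalar_left[of x y m c] cong_scalar_left[of x "- y" m c] by (auto simp: pm_cong_def)

lemma pm_cong_mult_cancel_left:
  fixes m :: "'a::{unique_euclidean_ring, ring_gcd}"
  assumes "coprime c m" "pm_cong m (c * x) (c * y)"
  shows "pm_cong m x y"
  using assms cong_mult_lcancel[OF assms(1), of x y] cong_mult_lcancel[OF assms(1), of x "- y"]
  by (auto simp: pm_cong_def)

lemma pm_cong_coprime:
  fixes m :: int
  assumes "pm_cong m x y" "coprime y m"
  shows "coprime x m"
  using assms cong_imp_coprime[of y x m] cong_imp_coprime[of "- y" x m]
  by (auto simp: pm_cong_def cong_sym_eq)

lemma pm_cong_steps_progression:
  fixes p :: "nat \<Rightarrow> int"
  assumes steps: "\<And>x. pm_cong m (p (Suc x) - p x) c"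
    and no_return: "\<And>x. \<not> [p (Suc (Suc x)) = p x] (mod m)"
  shows "[p x = p 0 + int x * (p 1 - p 0)] (mod m)"
proof -
  define d where "d = p 1 - p 0"
  have step: "[p (Suc x) - p x = d] (mod m)" for x
  proof (induction x)
    case 0
    show ?case
      by (simp add: d_def)
  next
    case (Suc x)
    show ?case
    proof (rule ccontr)
      \<comment> \<open>two consecutive steps of opposite sign would return to \<open>p x\<close>\<close>
      assume "\<not> [p (Suc (Suc x)) - p (Suc x) = d] (mod m)"
      then have "\<not> [p (Suc (Suc x)) - p (Suc x) = p (Suc x) - p x] (mod m)"
        using Suc.IH cong_trans by blast
      moreover have "pm_cong m (p (Suc (Suc x)) - p (Suc x)) (p (Suc x) - p x)"
        using steps[of "Suc x"] pm_cong_sym[OF steps[of x]] by (rule pm_cong_trans)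
      ultimately have "[p (Suc (Suc x)) - p (Suc x) = - (p (Suc x) - p x)] (mod m)"
        by (simp add: pm_cong_def)
      then have "[p (Suc (Suc x)) = p x] (mod m)"
        by (simp add: cong_iff_dvd_diff)
      with no_return show False
        by blast
    qed
  qed
  have "[p x = p 0 + int x * d] (mod m)" for x
  proof (induction x)
    case (Suc x)
    have "[p (Suc x) = p x + d] (mod m)"
      using step[of x] by (simp add: cong_iff_dvd_diff algebra_simps)
    also have "[p x + d = p 0 + int x * d + d] (mod m)"
      by (rule cong_add[OF Suc.IH cong_refl])
    finally show ?case
      by (simp add: algebra_simps)
  qed simp
  then show ?thesis
    by (simp add: d_def)
qed

lemma correlationsD:
  assumes "\<alpha> \<in> correlations S inc t"
  shows correlation_bij: "bij_betw \<alpha> S S"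
    and correlation_extensional: "\<alpha> \<in> extensional S"
    and correlation_type_iff: "x \<in> S \<Longrightarrow> y \<in> S \<Longrightarrow> t (\<alpha> x) = t (\<alpha> y) \<longleftrightarrow> t x = t y"
    and correlation_inc_iff: "x \<in> S \<Longrightarrow> y \<in> S \<Longrightarrow> inc (\<alpha> x) (\<alpha> y) \<longleftrightarrow> inc x y"
  using assms by (auto simp: correlations_def Bij_def)

definition same_type :: "'a set \<Rightarrow> ('a \<Rightarrow> 'i) \<Rightarrow> 'a \<Rightarrow> 'a set" where
  "same_type S t x = {y \<in> S. t y = t x}"

definition incident_to_full_type ::
  "'a set \<Rightarrow> ('a \<Rightarrow> 'a \<Rightarrow> bool) \<Rightarrow> ('a \<Rightarrow> 'i) \<Rightarrow> 'a \<Rightarrow> bool" where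
  "incident_to_full_type S inc t x \<longleftrightarrow>
     (\<exists>y\<in>S. t y \<noteq> t x \<and> (\<forall>z\<in>same_type S t y. inc x z))"

lemma image_same_type_correlation:
  assumes \<alpha>: "\<alpha> \<in> correlations S inc t" and x: "x \<in> S"
  shows "\<alpha> ` same_type S t x = same_type S t (\<alpha> x)"
proof -
  note bij = correlation_bij[OF \<alpha>]
  have "\<alpha> ` same_type S t x = \<alpha> ` {y \<in> S. t (\<alpha> y) = t (\<alpha> x)}"
    using correlation_type_iff[OF \<alpha> _ x] by (auto simp: same_type_def)
  also have "\<dots> = {z \<in> \<alpha> ` S. t z = t (\<alpha> x)}"
    by auto
  finally show ?thesis
    using bij by (simp add: bij_betw_def same_type_def)
qed

lemma card_same_type_correlation:
  assumes \<alpha>: "\<alpha> \<in> correlations S inc t" and x: "x \<in> S"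
  shows "card (same_type S t (\<alpha> x)) = card (same_type S t x)"
proof -
  have "inj_on \<alpha> (same_type S t x)"
    using bij_betw_imp_inj_on[OF correlation_bij[OF \<alpha>]]
    by (rule inj_on_subset) (auto simp: same_type_def)
  then show ?thesis
    by (simp add: card_image flip: image_same_type_correlation[OF \<alpha> x])
qed

lemma incident_to_full_type_correlation:
  assumes \<alpha>: "\<alpha> \<in> correlations S inc t" and x: "x \<in> S"
    and full: "incident_to_full_type S inc t (\<alpha> x)"
  shows "incident_to_full_type S inc t x"
proof -
  obtain y' where "y' \<in> S" "t y' \<noteq> t (\<alpha> x)"
    and inc_all: "\<forall>z\<in>same_type S t y'. inc (\<alpha> x) z"
    using full by (auto simp: incident_to_full_type_def)
  moreover obtain y where y: "y \<in> S" "y' = \<alpha> y"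
    using \<open>y' \<in> S\<close> correlation_bij[OF \<alpha>] by (auto simp: bij_betw_def)
  ultimately have "t y \<noteq> t x"
    using correlation_type_iff[OF \<alpha> y(1) x] by simp
  moreover have "inc x z" if "z \<in> same_type S t y" for z
  proof -
    have "\<alpha> z \<in> same_type S t y'"
      using that y image_same_type_correlation[OF \<alpha> y(1)] by blast
    then show ?thesis
      using inc_all that correlation_inc_iff[OF \<alpha> x] by (auto simp: same_type_def)
  qed
  ultimately show ?thesis
    using y(1) by (auto simp: incident_to_full_type_def)
qed

section \<open>The dihedral group and its automorphisms\<close>

lemma dihedral_mult:
  "(r1, s1) \<otimes>\<^bsub>dihedral n\<^esub> (r2, s2) = ((r1 + (if s1 then n - r2 else r2)) mod n, s1 \<noteq> s2)"
  by (simp add: dihedral_def)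

lemma dihedral_one: "\<one>\<^bsub>dihedral n\<^esub> = (0, False)"
  by (simp add: dihedral_def)

lemma carrier_dihedral: "carrier (dihedral n) = {..<n} \<times> UNIV"
  by (simp add: dihedral_def)

lemma dihedral_mult_zres:
  assumes "r2 \<le> n"
  shows "(r1, s1) \<otimes>\<^bsub>dihedral n\<^esub> (r2, s2) =
    (zres n (int r1 + (if s1 then - int r2 else int r2)), s1 \<noteq> s2)"
proof -
  have "int (r1 + (if s1 then n - r2 else r2)) =
      int r1 + (if s1 then - int r2 else int r2) + (if s1 then int n else 0)"
    using assms by auto
  then have "zres n (int (r1 + (if s1 then n - r2 else r2))) =
      zres n (int r1 + (if s1 then - int r2 else int r2))"
    by (cases s1) (simp_all add: zres_def diff_add_eq[symmetric])
  then show ?thesis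
    by (simp only: zres_of_nat dihedral_mult)
qed

lemma group_dihedral:
  assumes "n > 0"
  shows "group (dihedral n)"
proof (rule groupI)
  fix x y assume "x \<in> carrier (dihedral n)" "y \<in> carrier (dihedral n)"
  then show "x \<otimes>\<^bsub>dihedral n\<^esub> y \<in> carrier (dihedral n)"
    using assms by (cases x, cases y) (auto simp: dihedral_mult carrier_dihedral)
next
  show "\<one>\<^bsub>dihedral n\<^esub> \<in> carrier (dihedral n)"
    using assms by (simp add: dihedral_one carrier_dihedral)
next
  fix x y z
  assume "x \<in> carrier (dihedral n)" "y \<in> carrier (dihedral n)" "z \<in> carrier (dihedral n)"
  then obtain r1 s1 r2 s2 r3 s3 where "x = (r1, s1)" "y = (r2, s2)" "z = (r3, s3)" "r2 < n" "r3 < n"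
    by (auto simp: carrier_dihedral)
  then show "x \<otimes>\<^bsub>dihedral n\<^esub> y \<otimes>\<^bsub>dihedral n\<^esub> z = x \<otimes>\<^bsub>dihedral n\<^esub> (y \<otimes>\<^bsub>dihedral n\<^esub> z)"
    using assms by (simp add: dihedral_mult_zres zres_less less_imp_le of_nat_zres)
      (simp add: zres_def mod_simps algebra_simps)
next
  fix x assume "x \<in> carrier (dihedral n)"
  then show "\<one>\<^bsub>dihedral n\<^esub> \<otimes>\<^bsub>dihedral n\<^esub> x = x"
    by (cases x) (auto simp: dihedral_one dihedral_mult carrier_dihedral)
next
  fix x assume "x \<in> carrier (dihedral n)"
  then obtain r s where x: "x = (r, s)" "r < n"
    by (auto simp: carrier_dihedral)
  show "\<exists>y\<in>carrier (dihedral n). y \<otimes>\<^bsub>dihedral n\<^esub> x = \<one>\<^bsub>dihedral n\<^esub>"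
  proof (cases s)
    case True
    then show ?thesis
      using x by (intro bexI[of _ "(r, True)"]) (auto simp: dihedral_one dihedral_mult carrier_dihedral)
  next
    case False
    then show ?thesis
      using x assms by (intro bexI[of _ "((n - r) mod n, False)"])
        (auto simp: dihedral_one dihedral_mult carrier_dihedral mod_add_left_eq)
  qed
qed

definition dihedral_aut :: "nat \<Rightarrow> nat \<Rightarrow> nat \<Rightarrow> nat \<times> bool \<Rightarrow> nat \<times> bool" where
  "dihedral_aut n a b =
     (\<lambda>x\<in>carrier (dihedral n). ((a * fst x + (if snd x then b else 0)) mod n, snd x))"

lemma dihedral_aut_apply:
  "r < n \<Longrightarrow> dihedral_aut n a b (r, s) = ((a * r + (if s then b else 0)) mod n, s)"
  by (simp add: dihedral_aut_def carrier_dihedral)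

lemma dihedral_aut_apply_zres:
  "r < n \<Longrightarrow> dihedral_aut n a b (r, s) = (zres n (int a * int r + (if s then int b else 0)), s)"
  by (simp add: dihedral_aut_apply flip: zres_of_nat)

lemma dihedral_aut_in_auto:
  assumes n: "n > 0" and a: "coprime a n"
  shows "dihedral_aut n a b \<in> auto (dihedral n)"
proof -
  let ?G = "dihedral n" and ?\<psi> = "dihedral_aut n a b"
  have closed: "?\<psi> ` carrier ?G \<subseteq> carrier ?G"
    using n by (auto simp: carrier_dihedral dihedral_aut_apply)
  have "?\<psi> \<in> hom ?G ?G"
  proof (rule homI)
    fix x y assume "x \<in> carrier ?G" "y \<in> carrier ?G"
    then obtain r1 s1 r2 s2 where "x = (r1, s1)" "y = (r2, s2)" "r1 < n" "r2 < n"
      by (auto simp: carrier_dihedral)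
    then show "?\<psi> (x \<otimes>\<^bsub>?G\<^esub> y) = ?\<psi> x \<otimes>\<^bsub>?G\<^esub> ?\<psi> y"
      using n by (cases s1; cases s2)
        (simp_all add: dihedral_aut_apply_zres dihedral_mult_zres zres_less less_imp_le of_nat_zres,
         simp_all add: zres_def mod_simps mod_mult_mod_add, simp_all add: algebra_simps)
  qed (use closed in blast)
  moreover have inj: "inj_on ?\<psi> (carrier ?G)"
  proof (rule inj_onI)
    fix x y assume "x \<in> carrier ?G" "y \<in> carrier ?G" "?\<psi> x = ?\<psi> y"
    then obtain r1 r2 s where xy: "x = (r1, s)" "y = (r2, s)" "r1 < n" "r2 < n"
      and "[a * r1 + (if s then b else 0) = a * r2 + (if s then b else 0)] (mod n)"
      by (auto simp: carrier_dihedral dihedral_aut_apply cong_def)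
    then have "[r1 = r2] (mod n)"
      using a by (simp add: cong_add_rcancel_nat cong_mult_lcancel_nat)
    then show "x = y"
      using xy by (simp add: cong_less_modulus_unique_nat)
  qed
  moreover have "?\<psi> \<in> Bij (carrier ?G)"
    using closed inj
    by (intro Bij_if_inj_on_finite) (simp_all add: carrier_dihedral dihedral_aut_def)
  ultimately show ?thesis
    by (simp add: auto_def)
qed

lemma dihedral_hom_values:
  assumes hom: "\<psi> \<in> hom (dihedral n) (dihedral n)"
    and rot: "\<psi> (1, False) = (a, False)" and refl: "\<psi> (0, True) = (b, s)" and j: "j < n"
  shows "\<psi> (j, False) = ((a * j) mod n, False)" "\<psi> (j, True) = ((a * j + b) mod n, s)"
proof -
  let ?G = "dihedral n"
  have grp: "group ?G"
    using j group_dihedral by simp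
  have rot_j: "\<psi> (j, False) = ((a * j) mod n, False)" if "j < n" for j
    using that
  proof (induction j)
    case 0
    show ?case
      using hom_one[OF hom grp grp] by (simp add: dihedral_one)
  next
    case (Suc j)
    have "(Suc j, False) = (j, False) \<otimes>\<^bsub>?G\<^esub> (1, False)"
      using Suc.prems by (simp add: dihedral_mult)
    then have "\<psi> (Suc j, False) = ((a * j) mod n, False) \<otimes>\<^bsub>?G\<^esub> (a, False)"
      using hom_mult[OF hom, of "(j, False)" "(1, False)"] Suc rot by (simp add: carrier_dihedral)
    then show ?case
      by (simp add: dihedral_mult add.commute mod_add_right_eq)
  qed
  then show "\<psi> (j, False) = ((a * j) mod n, False)"
    using j .
  have "(j, True) = (j, False) \<otimes>\<^bsub>?G\<^esub> (0, True)"
    using j by (simp add: dihedral_mult)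
  then have "\<psi> (j, True) = ((a * j) mod n, False) \<otimes>\<^bsub>?G\<^esub> (b, s)"
    using hom_mult[OF hom, of "(j, False)" "(0, True)"] j rot_j refl by (simp add: carrier_dihedral)
  then show "\<psi> (j, True) = ((a * j + b) mod n, s)"
    by (simp add: dihedral_mult mod_add_left_eq)
qed

lemma auto_dihedral_rotation:
  assumes n: "n \<ge> 3" and \<psi>: "\<psi> \<in> auto (dihedral n)"
  obtains a where "a < n" "\<psi> (1, False) = (a, False)"
proof -
  let ?G = "dihedral n"
  have hom: "\<psi> \<in> hom ?G ?G" and inj: "inj_on \<psi> (carrier ?G)"
    using \<psi> by (auto simp: auto_def Bij_def bij_betw_def)
  obtain a s where \<psi>1: "\<psi> (1, False) = (a, s)" and a: "a < n"
    using hom_in_carrier[OF hom, of "(1, False)"] n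
    by (cases "\<psi> (1, False)") (auto simp: carrier_dihedral)
  have "\<not> s"
  proof
    assume s
    have "\<psi> (2, False) = \<psi> ((1, False) \<otimes>\<^bsub>?G\<^esub> (1, False))"
      using n by (simp add: dihedral_mult numeral_2_eq_2)
    also have "\<dots> = (a, True) \<otimes>\<^bsub>?G\<^esub> (a, True)"
      using hom_mult[OF hom] \<psi>1 \<open>s\<close> n by (simp add: carrier_dihedral)
    also have "\<dots> = \<psi> (0, False)"
      using hom_one[OF hom] group_dihedral n a by (simp add: dihedral_mult dihedral_one)
    finally show False
      using inj n by (auto simp: carrier_dihedral dest: inj_onD)
  qed
  then show ?thesis
    using that a \<psi>1 by simp
qed

lemma auto_dihedral_reflection:
  assumes n: "n \<ge> 3" and \<psi>: "\<psi> \<in> auto (dihedral n)" and \<psi>1: "\<psi> (1, False) = (a, False)"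
  obtains b where "b < n" "\<psi> (0, True) = (b, True)"
proof -
  let ?G = "dihedral n"
  have hom: "\<psi> \<in> hom ?G ?G" and surj: "\<psi> ` carrier ?G = carrier ?G"
    using \<psi> by (auto simp: auto_def Bij_def bij_betw_def)
  obtain b s where \<psi>0: "\<psi> (0, True) = (b, s)" and b: "b < n"
    using hom_in_carrier[OF hom, of "(0, True)"] n
    by (cases "\<psi> (0, True)") (auto simp: carrier_dihedral)
  have s
  proof (rule ccontr)
    assume "\<not> s"
    have "(0, True) \<in> \<psi> ` carrier ?G"
      using surj n by (simp add: carrier_dihedral)
    then obtain j t where "j < n" "\<psi> (j, t) = (0, True)"
      by (auto simp: carrier_dihedral)
    then show False
      using dihedral_hom_values[OF hom \<psi>1 \<psi>0] \<open>\<not> s\<close> by (cases t) auto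
  qed
  then show ?thesis
    using that b \<psi>0 by simp
qed

lemma auto_dihedral_eq_dihedral_aut:
  assumes n: "n \<ge> 3" and \<psi>: "\<psi> \<in> auto (dihedral n)"
  obtains a b where "a < n" "b < n" "coprime a n" "\<psi> = dihedral_aut n a b"
proof -
  let ?G = "dihedral n"
  obtain a where a: "a < n" and \<psi>1: "\<psi> (1, False) = (a, False)"
    using auto_dihedral_rotation[OF n \<psi>] by blast
  obtain b where b: "b < n" and \<psi>0: "\<psi> (0, True) = (b, True)"
    using auto_dihedral_reflection[OF n \<psi> \<psi>1] by blast
  have hom: "\<psi> \<in> hom ?G ?G" and surj: "\<psi> ` carrier ?G = carrier ?G"
    and ext: "\<psi> \<in> extensional (carrier ?G)"
    using \<psi> by (auto simp: auto_def Bij_def bij_betw_def)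
  have \<psi>_eq: "\<psi> = dihedral_aut n a b"
  proof
    fix x
    show "\<psi> x = dihedral_aut n a b x"
    proof (cases "x \<in> carrier ?G")
      case True
      then obtain j t where "x = (j, t)" "j < n"
        by (auto simp: carrier_dihedral)
      then show ?thesis
        using dihedral_hom_values[OF hom \<psi>1 \<psi>0] by (cases t) (simp_all add: dihedral_aut_apply)
    next
      case False
      then show ?thesis
        by (simp add: extensional_arb[OF ext] dihedral_aut_def)
    qed
  qed
  have "(1, False) \<in> \<psi> ` carrier ?G"
    using surj n by (simp add: carrier_dihedral)
  then obtain j t where "j < n" "dihedral_aut n a b (j, t) = (1, False)"
    by (auto simp: carrier_dihedral \<psi>_eq)
  then have "[a * j = 1] (mod n)"
    using n by (cases t) (simp_all add: dihedral_aut_apply cong_def)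
  then have "coprime a n"
    by (auto simp: coprime_iff_invertible_nat)
  with a b \<psi>_eq show ?thesis
    using that by blast
qed

lemma compose_dihedral_aut:
  "compose (carrier (dihedral n)) (dihedral_aut n a b) (dihedral_aut n a' b') =
     dihedral_aut n (a * a') (a * b' + b)"
proof
  fix x
  show "compose (carrier (dihedral n)) (dihedral_aut n a b) (dihedral_aut n a' b') x =
      dihedral_aut n (a * a') (a * b' + b) x"
  proof (cases "x \<in> carrier (dihedral n)")
    case True
    then obtain r s where "x = (r, s)" "r < n"
      by (auto simp: carrier_dihedral)
    then show ?thesis
      by (cases s) (simp_all add: compose_eq carrier_dihedral dihedral_aut_apply mod_mult_mod_add
          mod_mult_right_eq, simp_all add: algebra_simps)
  next
    case False
    then show ?thesis
      by (simp add: compose_def dihedral_aut_def)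
  qed
qed

lemma inv_dihedral_rotation:
  assumes "r < n"
  shows "inv\<^bsub>dihedral n\<^esub> (r, False) = (zres n (- int r), False)"
proof -
  have "n > 0"
    using assms by simp
  then have "(zres n (- int r), False) \<otimes>\<^bsub>dihedral n\<^esub> (r, False) = \<one>\<^bsub>dihedral n\<^esub>"
    using assms by (simp add: dihedral_mult_zres dihedral_one of_nat_zres) (simp add: zres_def mod_simps)
  then show ?thesis
    using group.inv_equality[OF group_dihedral] assms \<open>n > 0\<close>
    by (simp add: carrier_dihedral zres_less)
qed

lemma inv_dihedral_reflection:
  assumes "r < n"
  shows "inv\<^bsub>dihedral n\<^esub> (r, True) = (r, True)"
proof -
  have "(r, True) \<otimes>\<^bsub>dihedral n\<^esub> (r, True) = \<one>\<^bsub>dihedral n\<^esub>"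
    using assms by (simp add: dihedral_mult dihedral_one)
  then show ?thesis
    using group.inv_equality[OF group_dihedral] assms by (simp add: carrier_dihedral)
qed

lemma conjugation_dihedral:
  assumes n: "n \<ge> 3" and r: "r < n"
  shows "(\<lambda>x\<in>carrier (dihedral n). (r, s) \<otimes>\<^bsub>dihedral n\<^esub> x \<otimes>\<^bsub>dihedral n\<^esub> inv\<^bsub>dihedral n\<^esub> (r, s)) =
    dihedral_aut n (if s then n - 1 else 1) ((2 * r) mod n)"
    (is "?c = _")
proof -
  let ?G = "dihedral n"
  have n0: "n > 0"
    using n by simp
  have "(r, s) \<in> carrier ?G"
    using r by (simp add: carrier_dihedral)
  then have "?c \<in> auto ?G"
    using group.conjugation_in_auto[OF group_dihedral[OF n0]] by blast
  then obtain a b where ab: "a < n" "b < n" "?c = dihedral_aut n a b"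
    using auto_dihedral_eq_dihedral_aut[OF n] by blast
  have "?c (1, False) = (if s then n - 1 else 1, False)"
    using n r by (cases s) (simp_all add: carrier_dihedral inv_dihedral_rotation inv_dihedral_reflection
        dihedral_mult_zres zres_less less_imp_le of_nat_zres,
        simp_all add: zres_def mod_simps zmod_zminus1_eq_if nat_diff_distrib)
  moreover have "?c (0, True) = ((2 * r) mod n, True)"
    using n r by (cases s) (simp_all add: carrier_dihedral inv_dihedral_rotation inv_dihedral_reflection
        dihedral_mult_zres zres_less less_imp_le of_nat_zres,
        simp_all add: zres_def mod_simps nat_mod_distrib nat_mult_distrib)
  ultimately show ?thesis
    using ab n by (simp add: dihedral_aut_apply)
qed

section \<open>Edge types and the incidence system\<close>

lemma mem_tau_bar_iff: "k \<in> tau_bar n \<longleftrightarrow> 1 \<le> k \<and> 2 * k < n \<and> coprime k n"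
  unfolding tau_bar_def tau_def by auto

lemma tau_bar_subset: "tau_bar n \<subseteq> {1..<n}"
  by (auto simp: mem_tau_bar_iff)

(* The type of the edges {x, x + j}, as E_j = E_(n - j). *)
definition edge_type :: "nat \<Rightarrow> nat \<Rightarrow> nat" where
  "edge_type n j = min (j mod n) (n - j mod n)"

lemma edge_type_mod [simp]: "edge_type n (j mod n) = edge_type n j"
  by (simp add: edge_type_def)

lemma edge_type_tau_bar: "k \<in> tau_bar n \<Longrightarrow> edge_type n k = k"
  unfolding edge_type_def mem_tau_bar_iff by auto

lemma pm_cong_edge_type:
  assumes "n > 0"
  shows "pm_cong (int n) (int (edge_type n j)) (int j)"
proof (cases "j mod n \<le> n - j mod n")
  case True
  then show ?thesis
    by (simp add: edge_type_def pm_cong_def cong_int_iff)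
next
  case False
  then have "int (edge_type n j) = - int (j mod n) + int n"
    using assms by (simp add: edge_type_def of_nat_diff less_imp_le)
  then have "[int (edge_type n j) = - int j] (mod int n)"
    by (simp add: cong_def of_nat_mod mod_minus_eq)
  then show ?thesis
    by (simp add: pm_cong_def)
qed

lemma edge_type_eqI:
  assumes n: "n > 0" and pm: "pm_cong (int n) (int j) (int j')"
  shows "edge_type n j = edge_type n j'"
proof -
  define r r' where "r = j mod n" and "r' = j' mod n"
  have r: "r < n" "r' < n"
    using n by (simp_all add: r_def r'_def)
  from pm consider "[j = j'] (mod n)" | "[int j + int j' = 0] (mod int n)"
    unfolding pm_cong_def cong_int_iff
    by (metis add.commute cong_add_lcancel_0 minus_add_cancel)
  then show ?thesis
  proof cases
    case 1
    then show ?thesis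
      by (simp add: edge_type_def cong_def)
  next
    case 2
    then have "[j + j' = 0] (mod n)"
      by (simp flip: cong_int_iff)
    then have "n dvd r + r'"
      by (simp add: r_def r'_def cong_0_iff mod_add_eq dvd_eq_mod_eq_0)
    then obtain q where "r + r' = n * q"
      by blast
    moreover have "n * q < n * 2"
      using r \<open>r + r' = n * q\<close> by linarith
    then have "q < 2"
      by simp
    ultimately have "r + r' = 0 \<or> r + r' = n"
      by (auto simp: less_2_cases_iff)
    then show ?thesis
      using r by (auto simp: edge_type_def r_def[symmetric] r'_def[symmetric])
  qed
qed

lemma edge_type_eq_iff:
  assumes n: "n > 0"
  shows "edge_type n j = edge_type n j' \<longleftrightarrow> pm_cong (int n) (int j) (int j')"
proof
  assume "edge_type n j = edge_type n j'"
  then show "pm_cong (int n) (int j) (int j')"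
    using pm_cong_edge_type[OF n, of j] pm_cong_edge_type[OF n, of j']
    by (metis pm_cong_sym pm_cong_trans)
qed (rule edge_type_eqI[OF n])

lemma tau_bar_pm_cong_imp_eq:
  assumes "k \<in> tau_bar n" "k' \<in> tau_bar n" "pm_cong (int n) (int k) (int k')"
  shows "k = k'"
proof -
  have "n > 0"
    using assms(1) by (simp add: mem_tau_bar_iff)
  then have "edge_type n k = edge_type n k'"
    using assms(3) by (rule edge_type_eqI)
  then show ?thesis
    using assms(1,2) by (simp add: edge_type_tau_bar)
qed

lemma edge_type_in_tau_bar:
  assumes n: "n \<ge> 3" and j: "coprime j n"
  shows "edge_type n j \<in> tau_bar n"
proof -
  define r where "r = j mod n"
  have r: "coprime r n" "r < n"
    using j n by (simp_all add: r_def)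
  have "r \<noteq> 0"
    using r n by (intro notI) simp
  moreover have "2 * r \<noteq> n"
  proof
    assume "2 * r = n"
    then have "r = 1"
      using r(1) coprime_common_divisor_nat[of r n r] by auto
    then show False
      using \<open>2 * r = n\<close> n by simp
  qed
  moreover have "coprime (n - r) n"
    using r by (simp add: coprime_iff_gcd_eq_1 gcd_diff2_nat)
  ultimately show ?thesis
    using r by (auto simp: edge_type_def mem_tau_bar_iff r_def[symmetric] min_def)
qed

lemma edge_type_mult_eq_iff:
  assumes "n > 0" "coprime a n" "k \<in> tau_bar n" "k' \<in> tau_bar n"
  shows "edge_type n (a * k) = edge_type n (a * k') \<longleftrightarrow> k = k'"
  using assms pm_cong_mult_cancel_left[of "int a" "int n" "int k" "int k'"]
  by (auto simp: edge_type_eq_iff intro: tau_bar_pm_cong_imp_eq)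

lemma edge_type_mult_edge_type:
  "n > 0 \<Longrightarrow> edge_type n (a * edge_type n j) = edge_type n (a * j)"
  by (simp add: edge_type_eq_iff pm_cong_mult_left pm_cong_edge_type)

lemma Eset_subset: "e \<in> Eset n k \<Longrightarrow> e \<subseteq> {..<n}"
  by (auto simp: Eset_def)

lemma Eset_pm_cong:
  assumes "{u, w} \<in> Eset n k"
  shows "pm_cong (int n) (int w - int u) (int k)"
proof -
  obtain x where "{u, w} = {x, (x + k) mod n}"
    using assms by (auto simp: Eset_def)
  moreover have "[int ((x + k) mod n) = int x + int k] (mod int n)"
    using cong_int_iff[of "(x + k) mod n" "x + k" n] by simp
  ultimately have "[int w - int u = int k] (mod int n) \<or> [int w - int u = - int k] (mod int n)"
    by (auto simp: doubleton_eq_iff cong_iff_dvd_diff dvd_diff_commute algebra_simps)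
  then show ?thesis
    by (simp add: pm_cong_def)
qed

lemma Eset_type_unique:
  assumes i: "i \<in> tau_bar n" and j: "j \<in> tau_bar n" and ei: "e \<in> Eset n i" and ej: "e \<in> Eset n j"
  shows "i = j"
proof -
  obtain x where "e = {x, (x + i) mod n}"
    using ei by (auto simp: Eset_def)
  then have "pm_cong (int n) (int ((x + i) mod n) - int x) (int i)"
    "pm_cong (int n) (int ((x + i) mod n) - int x) (int j)"
    using Eset_pm_cong ei ej by auto
  then have "pm_cong (int n) (int i) (int j)"
    by (metis pm_cong_sym pm_cong_trans)
  then show ?thesis
    by (rule tau_bar_pm_cong_imp_eq[OF i j])
qed

type_synonym dgam_elem = "nat + nat \<times> nat set"

lemma mem_Dgam_elems_Inl [simp]: "Inl v \<in> Dgam_elems n \<longleftrightarrow> v < n"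
  by (auto simp: Dgam_elems_def)

lemma mem_Dgam_elems_Inr [simp]: "Inr (k, e) \<in> Dgam_elems n \<longleftrightarrow> k \<in> tau_bar n \<and> e \<in> Eset n k"
  by (auto simp: Dgam_elems_def)

lemma Dgam_elems_cases [consumes 1, case_names vertex edge]:
  assumes "x \<in> Dgam_elems n"
  obtains v where "x = Inl v" "v < n"
    | k e where "x = Inr (k, e)" "k \<in> tau_bar n" "e \<in> Eset n k"
  using assms by (auto simp: Dgam_elems_def)

lemma Dgam_type_simps [simp]:
  "Dgam_type n (Inl v) = (if even n \<and> odd v then -1 else 0)"
  "Dgam_type n (Inr (k, e)) = int k"
  by (simp_all add: Dgam_type_def)

lemma Dgam_inc_simps [simp]:
  "Dgam_inc n (Inl u) (Inl v) \<longleftrightarrow> even n \<and> (even u \<noteq> even v)"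
  "Dgam_inc n (Inl v) (Inr (k, e)) \<longleftrightarrow> v \<in> e"
  "Dgam_inc n (Inr (k, e)) (Inl v) \<longleftrightarrow> v \<in> e"
  "Dgam_inc n (Inr (i, e)) (Inr (j, f)) \<longleftrightarrow> i \<noteq> j"
  by (simp_all add: Dgam_inc_def)

lemma finite_Dgam_elems: "finite (Dgam_elems n)"
proof -
  have "Dgam_elems n \<subseteq> Inl ` {..<n} \<union> Inr ` (tau_bar n \<times> Pow {..<n})"
    using Eset_subset by (auto simp: Dgam_elems_def)
  moreover have "finite (tau_bar n)"
    using tau_bar_subset by (rule finite_subset) simp
  ultimately show ?thesis
    using finite_subset by blast
qed

lemma Dgam_type_edge_pos: "k \<in> tau_bar n \<Longrightarrow> Dgam_type n (Inr (k, e)) > 0"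
  by (simp add: mem_tau_bar_iff)

lemma Dgam_type_image:
  assumes n: "n > 0"
  shows "Dgam_type n ` Dgam_elems n = Dgam_types n"
proof
  show "Dgam_type n ` Dgam_elems n \<subseteq> Dgam_types n"
  proof
    fix t assume "t \<in> Dgam_type n ` Dgam_elems n"
    then obtain x where "x \<in> Dgam_elems n" "t = Dgam_type n x"
      by blast
    then show "t \<in> Dgam_types n"
      by (cases rule: Dgam_elems_cases) (auto simp: Dgam_types_def)
  qed
next
  show "Dgam_types n \<subseteq> Dgam_type n ` Dgam_elems n"
  proof
    fix t assume "t \<in> Dgam_types n"
    then consider "t = 0" | "even n" "t = -1" | k where "k \<in> tau_bar n" "t = int k"
      by (auto simp: Dgam_types_def split: if_splits)
    then show "t \<in> Dgam_type n ` Dgam_elems n"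
    proof cases
      case 1
      show ?thesis
        using n by (intro image_eqI[of _ _ "Inl 0"]) (simp_all add: 1)
    next
      case 2
      then have "1 < n"
        using n by (auto elim: oddE)
      then show ?thesis
        by (intro image_eqI[of _ _ "Inl 1"]) (simp_all add: 2)
    next
      case (3 k)
      have "{0, k mod n} \<in> Eset n k"
        using n by (force simp: Eset_def)
      then show ?thesis
        by (intro image_eqI[of _ _ "Inr (k, {0, k mod n})"]) (simp_all add: 3)
    qed
  qed
qed

lemma not_Dgam_inc_same_type:
  assumes x: "x \<in> Dgam_elems n" and y: "y \<in> Dgam_elems n" and t: "Dgam_type n x = Dgam_type n y"
  shows "\<not> Dgam_inc n x y"
  using x
proof (cases rule: Dgam_elems_cases)
  case (vertex v)
  from y show ?thesis
  proof (cases rule: Dgam_elems_cases)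
    case (vertex w)
    then show ?thesis
      using t \<open>x = Inl v\<close> by (auto split: if_splits)
  next
    case (edge k e)
    then show ?thesis
      using t \<open>x = Inl v\<close> Dgam_type_edge_pos[of k n e] by (simp split: if_splits)
  qed
next
  case (edge k e)
  from y show ?thesis
  proof (cases rule: Dgam_elems_cases)
    case (vertex w)
    then show ?thesis
      using t \<open>x = Inr (k, e)\<close> Dgam_type_edge_pos[OF \<open>k \<in> tau_bar n\<close>, of e]
      by (simp split: if_splits)
  next
    case (edge k' e')
    then show ?thesis
      using t \<open>x = Inr (k, e)\<close> by simp
  qed
qed

lemma incidence_system_Dgam:
  assumes "n > 0"
  shows "incidence_system (Dgam_elems n) (Dgam_inc n) (Dgam_type n) (Dgam_types n)"
proof -
  have "finite (Dgam_types n)"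
    using tau_bar_subset finite_subset by (fastforce simp: Dgam_types_def)
  moreover have "Dgam_inc n x y \<longleftrightarrow> Dgam_inc n y x" for x y
    by (auto simp: Dgam_inc_def split: sum.splits prod.splits)
  ultimately show ?thesis
    using Dgam_type_image[OF assms] not_Dgam_inc_same_type by (auto simp: incidence_system_def)
qed

section \<open>Affine correlations\<close>

definition affine :: "nat \<Rightarrow> nat \<Rightarrow> nat \<Rightarrow> nat \<Rightarrow> nat" where
  "affine n a b x = (a * x + b) mod n"

lemma affine_less: "n > 0 \<Longrightarrow> affine n a b x < n"
  by (simp add: affine_def)

lemma inj_on_affine: "coprime a n \<Longrightarrow> inj_on (affine n a b) {..<n}"
  by (auto intro!: inj_onI simp: affine_def cong_less_modulus_unique_nat
      cong_add_rcancel_nat cong_mult_lcancel_nat simp flip: cong_def)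

lemma affine_affine: "affine n a b (affine n a' b' x) = affine n (a * a') (a * b' + b) x"
  unfolding affine_def by (simp only: mod_mult_mod_add) (simp add: algebra_simps)

lemma affine_mod: "affine n (a mod n) (b mod n) x = affine n a b x"
  unfolding affine_def by (intro mod_add_cong mod_mult_cong) simp_all

lemma odd_if_coprime_even: "even n \<Longrightarrow> coprime a n \<Longrightarrow> odd a"
  for a n :: nat
  using coprime_common_divisor[of a n 2] by auto

lemma even_affine_iff:
  assumes "even n" "odd a"
  shows "even (affine n a b x) \<longleftrightarrow> (even x \<longleftrightarrow> even b)"
proof -
  have "affine n a b x mod 2 = (a * x + b) mod 2"
    using assms(1) by (simp add: affine_def mod_mod_cancel)
  then show ?thesis
    using assms(2) by (auto simp: even_iff_mod_2_eq_zero[symmetric])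
qed

lemma affine_image_Eset:
  assumes n: "n > 0" and e: "e \<in> Eset n k"
  shows "affine n a b ` e \<in> Eset n (edge_type n (a * k))"
proof -
  obtain x where "x < n" and e_eq: "e = {x, (x + k) mod n}"
    using e by (auto simp: Eset_def)
  define y c where "y = affine n a b x" and "c = (a * k) mod n"
  have y: "y < n" and c: "c < n"
    using n by (simp_all add: y_def c_def affine_less)
  have "affine n a b ((x + k) mod n) = (y + c) mod n"
    unfolding y_def c_def affine_def by (simp only: mod_mult_mod_add mod_add_eq) (simp add: algebra_simps)
  then have img: "affine n a b ` e = {y, (y + c) mod n}"
    by (simp add: e_eq y_def)
  show ?thesis
  proof (cases "c \<le> n - c")
    case True
    then show ?thesis
      using img y by (auto simp: Eset_def edge_type_def c_def)
  next
    case False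
    have "((y + c) mod n + (n - c)) mod n = (y + c + (n - c)) mod n"
      by (rule mod_add_left_eq)
    also have "\<dots> = y"
      using y c by simp
    finally have "((y + c) mod n + (n - c)) mod n = y" .
    then have "affine n a b ` e = {(y + c) mod n, ((y + c) mod n + (n - c)) mod n}"
      using img by auto
    then show ?thesis
      using False n by (auto simp: Eset_def edge_type_def c_def)
  qed
qed

definition affine_corr :: "nat \<Rightarrow> nat \<Rightarrow> nat \<Rightarrow> dgam_elem \<Rightarrow> dgam_elem" where
  "affine_corr n a b = (\<lambda>x\<in>Dgam_elems n. case x of
       Inl v \<Rightarrow> Inl (affine n a b v)
     | Inr (k, e) \<Rightarrow> Inr (edge_type n (a * k), affine n a b ` e))"

lemma affine_corr_Inl [simp]: "v < n \<Longrightarrow> affine_corr n a b (Inl v) = Inl (affine n a b v)"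
  by (simp add: affine_corr_def)

lemma affine_corr_Inr [simp]:
  "k \<in> tau_bar n \<Longrightarrow> e \<in> Eset n k \<Longrightarrow>
     affine_corr n a b (Inr (k, e)) = Inr (edge_type n (a * k), affine n a b ` e)"
  by (simp add: affine_corr_def)

lemma affine_corr_mod: "affine_corr n (a mod n) (b mod n) = affine_corr n a b"
proof -
  have "edge_type n (a mod n * k) = edge_type n (a * k)" for k
    by (metis edge_type_mod mod_mult_left_eq)
  then show ?thesis
    by (auto simp: affine_corr_def affine_mod fun_eq_iff split: sum.split)
qed

lemma affine_corr_in_Dgam_elems:
  assumes n: "n \<ge> 3" and a: "coprime a n" and x: "x \<in> Dgam_elems n"
  shows "affine_corr n a b x \<in> Dgam_elems n"
  using x
proof (cases rule: Dgam_elems_cases)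
  case (vertex v)
  then show ?thesis
    using n by (simp add: affine_less)
next
  case (edge k e)
  then have "coprime (a * k) n"
    using a by (simp add: mem_tau_bar_iff)
  then show ?thesis
    using edge n by (simp add: edge_type_in_tau_bar affine_image_Eset)
qed

lemma inj_on_affine_corr:
  assumes n: "n \<ge> 3" and a: "coprime a n"
  shows "inj_on (affine_corr n a b) (Dgam_elems n)"
proof (rule inj_onI)
  fix x y assume x: "x \<in> Dgam_elems n" and y: "y \<in> Dgam_elems n"
    and eq: "affine_corr n a b x = affine_corr n a b y"
  have n0: "n > 0"
    using n by simp
  note inj = inj_on_affine[OF a, of b]
  from x show "x = y"
  proof (cases rule: Dgam_elems_cases)
    case (vertex v)
    from y show ?thesis
    proof (cases rule: Dgam_elems_cases)
      case (vertex w)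
      then show ?thesis
        using \<open>x = Inl v\<close> \<open>v < n\<close> eq inj_onD[OF inj] by simp
    next
      case (edge k e)
      then show ?thesis
        using \<open>x = Inl v\<close> \<open>v < n\<close> eq by simp
    qed
  next
    case (edge k e)
    from y show ?thesis
    proof (cases rule: Dgam_elems_cases)
      case (vertex w)
      then show ?thesis
        using \<open>x = Inr (k, e)\<close> edge eq by simp
    next
      case (edge k' e')
      have "k = k'"
        using edge \<open>x = Inr (k, e)\<close> \<open>k \<in> tau_bar n\<close> \<open>e \<in> Eset n k\<close> eq
        by (simp add: edge_type_mult_eq_iff[OF n0 a])
      moreover have "e = e'"
        using edge \<open>x = Inr (k, e)\<close> \<open>k \<in> tau_bar n\<close> \<open>e \<in> Eset n k\<close> eq
          inj_on_image_eq_iff[OF inj Eset_subset[OF \<open>e \<in> Eset n k\<close>] Eset_subset[OF \<open>e' \<in> Eset n k'\<close>]]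
        by simp
      ultimately show ?thesis
        using edge \<open>x = Inr (k, e)\<close> by simp
    qed
  qed
qed

lemma affine_corr_Bij:
  assumes n: "n \<ge> 3" and a: "coprime a n"
  shows "affine_corr n a b \<in> Bij (Dgam_elems n)"
proof (rule Bij_if_inj_on_finite)
  show "affine_corr n a b \<in> extensional (Dgam_elems n)"
    by (simp add: affine_corr_def)
  show "affine_corr n a b ` Dgam_elems n \<subseteq> Dgam_elems n"
    using affine_corr_in_Dgam_elems[OF n a] by blast
qed (simp_all add: finite_Dgam_elems inj_on_affine_corr[OF n a])

lemma affine_corr_in_correlations:
  assumes n: "n \<ge> 3" and a: "coprime a n"
  shows "affine_corr n a b \<in> correlations (Dgam_elems n) (Dgam_inc n) (Dgam_type n)"
proof -
  let ?\<sigma> = "affine_corr n a b"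
  have n0: "n > 0"
    using n by simp
  have parity: "(even (affine n a b v) \<longleftrightarrow> even (affine n a b w)) \<longleftrightarrow> (even v \<longleftrightarrow> even w)"
    if "even n" for v w
    using even_affine_iff[OF that odd_if_coprime_even[OF that a]] by auto
  have edge_type_pos: "0 < edge_type n (a * k)" if "k \<in> tau_bar n" for k
    using that edge_type_in_tau_bar[OF n, of "a * k"] a by (simp add: mem_tau_bar_iff)
  have mem_image: "affine n a b v \<in> affine n a b ` e \<longleftrightarrow> v \<in> e" if "v < n" "e \<in> Eset n k" for v e k
    using that inj_on_image_mem_iff[OF inj_on_affine[OF a] _ Eset_subset] by simp
  have "(Dgam_type n x = Dgam_type n y \<longleftrightarrow> Dgam_type n (?\<sigma> x) = Dgam_type n (?\<sigma> y)) \<and>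
      (Dgam_inc n x y \<longleftrightarrow> Dgam_inc n (?\<sigma> x) (?\<sigma> y))"
    if x: "x \<in> Dgam_elems n" and y: "y \<in> Dgam_elems n" for x y
    using x
  proof (cases rule: Dgam_elems_cases)
    case (vertex v)
    from y show ?thesis
    proof (cases rule: Dgam_elems_cases)
      case (vertex w)
      then show ?thesis
        using \<open>x = Inl v\<close> \<open>v < n\<close> parity by auto
    next
      case (edge k e)
      then show ?thesis
        using \<open>x = Inl v\<close> \<open>v < n\<close> mem_image edge_type_pos mem_tau_bar_iff by auto
    qed
  next
    case (edge k e)
    from y show ?thesis
    proof (cases rule: Dgam_elems_cases)
      case (vertex w)
      then show ?thesis
        using \<open>x = Inr (k, e)\<close> edge mem_image edge_type_pos mem_tau_bar_iff by auto
    next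
      case (edge k' e')
      then show ?thesis
        using \<open>x = Inr (k, e)\<close> \<open>k \<in> tau_bar n\<close> \<open>e \<in> Eset n k\<close>
        by (auto simp: edge_type_mult_eq_iff[OF n0 a])
    qed
  qed
  then show ?thesis
    using affine_corr_Bij[OF n a] by (simp add: correlations_def)
qed

lemma affine_corr_compose:
  assumes n: "n \<ge> 3" and a': "coprime a' n"
  shows "compose (Dgam_elems n) (affine_corr n a b) (affine_corr n a' b') = affine_corr n (a * a') (a * b' + b)"
proof
  fix x
  have n0: "n > 0"
    using n by simp
  show "compose (Dgam_elems n) (affine_corr n a b) (affine_corr n a' b') x = affine_corr n (a * a') (a * b' + b) x"
  proof (cases "x \<in> Dgam_elems n")
    case True
    then show ?thesis
    proof (cases rule: Dgam_elems_cases)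
      case (vertex v)
      then show ?thesis
        using n0 by (simp add: compose_eq affine_less affine_affine)
    next
      case (edge k e)
      have "coprime (a' * k) n"
        using edge a' by (simp add: mem_tau_bar_iff)
      then have "edge_type n (a' * k) \<in> tau_bar n"
        by (rule edge_type_in_tau_bar[OF n])
      then show ?thesis
        using edge n0 by (simp add: compose_eq affine_image_Eset edge_type_mult_edge_type
            image_image affine_affine mult.assoc)
    qed
  next
    case False
    then show ?thesis
      by (simp add: compose_def affine_corr_def)
  qed
qed

lemma edge_type_minus_one_mult:
  assumes "n > 0"
  shows "edge_type n ((n - 1) * k) = edge_type n k"
proof -
  have "int ((n - 1) * k) = - int k + int k * int n"
    using assms by (simp add: of_nat_diff algebra_simps)
  then have "[int ((n - 1) * k) = - int k] (mod int n)"
    by (simp add: cong_iff_dvd_diff)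
  then show ?thesis
    using assms by (simp add: edge_type_eqI pm_cong_def)
qed

lemma affine_corr_type_preserving:
  assumes n: "n \<ge> 3" and a: "a = 1 \<or> a = n - 1" and b: "even n \<longrightarrow> even b"
    and x: "x \<in> Dgam_elems n"
  shows "Dgam_type n (affine_corr n a b x) = Dgam_type n x"
  using x
proof (cases rule: Dgam_elems_cases)
  case (vertex v)
  have "even (affine n a b v) \<longleftrightarrow> even v" if "even n"
  proof -
    have "odd a"
      using a that n by (cases "a = 1") auto
    then show ?thesis
      using even_affine_iff[OF that] b that by simp
  qed
  then show ?thesis
    using vertex by auto
next
  case (edge k e)
  have "edge_type n (a * k) = k"
    using a n edge_type_minus_one_mult[of n k] edge_type_tau_bar[OF edge(2)] by auto
  then show ?thesis
    using edge by simp
qed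

lemma type_preserving_affine_corr_params:
  assumes n: "n \<ge> 3" and a: "a < n" and b: "b < n"
    and type_pres: "\<forall>x\<in>Dgam_elems n. Dgam_type n (affine_corr n a b x) = Dgam_type n x"
  shows "(a = 1 \<or> a = n - 1) \<and> (even n \<longrightarrow> even b)"
proof -
  have "Dgam_type n (Inl (affine n a b 0)) = Dgam_type n (Inl 0)"
    using type_pres[rule_format, of "Inl 0"] n by simp
  then have "even n \<longrightarrow> even b"
    using b by (auto simp: affine_def split: if_splits)
  have "1 \<in> tau_bar n" "{0, 1 mod n} \<in> Eset n 1"
    using n by (auto simp: mem_tau_bar_iff Eset_def)
  then have "edge_type n a = 1"
    using type_pres[rule_format, of "Inr (1, {0, 1 mod n})"] by simp
  then have "a = 1 \<or> a = n - 1"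
    using a by (simp add: edge_type_def min_def split: if_splits)
  with \<open>even n \<longrightarrow> even b\<close> show ?thesis
    by blast
qed

section \<open>Every correlation is affine\<close>

lemma card_same_type_vertex:
  assumes n: "n \<ge> 2" "even n" and v: "v < n"
  shows "card (same_type (Dgam_elems n) (Dgam_type n) (Inl v)) < n"
proof -
  define u where "u = (if even v then 1 else 0 :: nat)"
  have u: "u < n" "even u \<noteq> even v"
    using n by (auto simp: u_def)
  have "same_type (Dgam_elems n) (Dgam_type n) (Inl v) \<subseteq> Inl ` ({..<n} - {u})"
  proof
    fix y assume y: "y \<in> same_type (Dgam_elems n) (Dgam_type n) (Inl v)"
    then have "y \<in> Dgam_elems n"
      by (simp add: same_type_def)
    then show "y \<in> Inl ` ({..<n} - {u})"
      using y u n Dgam_type_edge_pos by (cases rule: Dgam_elems_cases) (auto simp: same_type_def split: if_splits)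
  qed
  then have "card (same_type (Dgam_elems n) (Dgam_type n) (Inl v))
      \<le> card (Inl ` ({..<n} - {u}) :: dgam_elem set)"
    by (rule card_mono[rotated]) simp
  also have "\<dots> = n - 1"
    using u by (simp add: card_image)
  finally show ?thesis
    using n by simp
qed

lemma card_same_type_edge:
  assumes k: "k \<in> tau_bar n" and e: "e \<in> Eset n k"
  shows "n \<le> card (same_type (Dgam_elems n) (Dgam_type n) (Inr (k, e)))"
proof -
  let ?edge = "\<lambda>x. Inr (k, {x, (x + k) mod n}) :: dgam_elem"
  have "?edge ` {..<n} \<subseteq> same_type (Dgam_elems n) (Dgam_type n) (Inr (k, e))"
    using k by (auto simp: same_type_def Eset_def)
  moreover have "inj_on ?edge {..<n}"
  proof (rule inj_onI)
    fix x y assume "x \<in> {..<n}" "y \<in> {..<n}" "?edge x = ?edge y"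
    then have "{x, (x + k) mod n} = {y, (y + k) mod n}" "x < n" "y < n"
      by auto
    moreover have "x \<noteq> (y + k) mod n \<or> (x + k) mod n \<noteq> y"
    proof (rule ccontr)
      assume "\<not> ?thesis"
      then have "(y + (k + k)) mod n = (y + 0) mod n"
        using \<open>y < n\<close> by (simp add: mod_add_left_eq add.assoc)
      then have "[y + (k + k) = y + 0] (mod n)"
        by (simp only: cong_def)
      then have "n dvd k + k"
        by (simp only: cong_add_lcancel_nat cong_0_iff)
      then show False
        using k by (auto simp: mem_tau_bar_iff dest: dvd_imp_le)
    qed
    ultimately show "x = y"
      by (auto simp: doubleton_eq_iff)
  qed
  ultimately show ?thesis
    using card_inj_on_le[of ?edge "{..<n}"] finite_Dgam_elems by (simp add: same_type_def)
qed

lemma not_incident_to_full_type_vertex: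
  assumes n: "odd n" "n \<ge> 3" and v: "v < n"
  shows "\<not> incident_to_full_type (Dgam_elems n) (Dgam_inc n) (Dgam_type n) (Inl v)"
proof
  assume "incident_to_full_type (Dgam_elems n) (Dgam_inc n) (Dgam_type n) (Inl v)"
  then obtain y where y: "y \<in> Dgam_elems n" "Dgam_type n y \<noteq> Dgam_type n (Inl v)"
    and inc_all: "\<forall>z\<in>same_type (Dgam_elems n) (Dgam_type n) y. Dgam_inc n (Inl v) z"
    by (auto simp: incident_to_full_type_def)
  from y show False
  proof (cases rule: Dgam_elems_cases)
    case (vertex w)
    then show False
      using y(2) n by simp
  next
    case (edge j f)
    define x where "x = (v + 1) mod n"
    have "Inr (j, {x, (x + j) mod n}) \<in> same_type (Dgam_elems n) (Dgam_type n) y"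
      using edge n by (auto simp: same_type_def Eset_def x_def)
    then have "v \<in> {x, (x + j) mod n}"
      using inc_all by fastforce
    moreover have "v \<noteq> x"
      using v n by (auto simp: x_def mod_Suc)
    moreover have "v \<noteq> (x + j) mod n"
    proof
      assume "v = (x + j) mod n"
      then have "(v + (1 + j)) mod n = (v + 0) mod n"
        using v by (simp add: x_def mod_add_left_eq add.assoc)
      then have "[v + (1 + j) = v + 0] (mod n)"
        by (simp only: cong_def)
      then have "n dvd 1 + j"
        by (simp only: cong_add_lcancel_nat cong_0_iff)
      then show False
        using edge by (auto simp: mem_tau_bar_iff dest: dvd_imp_le)
    qed
    ultimately show False
      by simp
  qed
qed

lemma incident_to_full_type_edge:
  assumes n: "odd n" "n > 3" and k: "k \<in> tau_bar n"
  shows "incident_to_full_type (Dgam_elems n) (Dgam_inc n) (Dgam_type n) (Inr (k, e))"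
proof -
  have "4 < n"
    using n by (cases "n = 4") auto
  then have "1 \<in> tau_bar n" "2 \<in> tau_bar n"
    using n by (auto simp: mem_tau_bar_iff)
  then obtain j where j: "j \<in> tau_bar n" "j \<noteq> k"
    by (cases "k = 1") auto
  have "{0, j mod n} \<in> Eset n j"
    using n by (force simp: Eset_def)
  then have "Inr (j, {0, j mod n}) \<in> Dgam_elems n"
    using j by simp
  moreover have "Dgam_inc n (Inr (k, e)) z"
    if "z \<in> same_type (Dgam_elems n) (Dgam_type n) (Inr (j, {0, j mod n}))" for z
    using that j Dgam_type_edge_pos[OF j(1)] by (auto simp: same_type_def elim!: Dgam_elems_cases split: if_splits)
  ultimately show ?thesis
    using j(2) unfolding incident_to_full_type_def by (intro bexI[of _ "Inr (j, {0, j mod n})"]) auto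
qed

lemma correlation_maps_vertex_to_vertex:
  assumes n: "n > 3" and \<alpha>: "\<alpha> \<in> correlations (Dgam_elems n) (Dgam_inc n) (Dgam_type n)" and v: "v < n"
  obtains w where "\<alpha> (Inl v) = Inl w" "w < n"
proof -
  have "Inl v \<in> Dgam_elems n"
    using v by simp
  then have "\<alpha> (Inl v) \<in> Dgam_elems n"
    using correlation_bij[OF \<alpha>] by (auto simp: bij_betw_def)
  then show ?thesis
  proof (cases rule: Dgam_elems_cases)
    case (vertex w)
    then show ?thesis
      using that by simp
  next
    case (edge k e)
    show ?thesis
    proof (cases "even n")
      case True
      then show ?thesis
        using card_same_type_correlation[OF \<alpha> \<open>Inl v \<in> Dgam_elems n\<close>] card_same_type_vertex[OF _ True v]
          card_same_type_edge[OF edge(2,3)] edge(1) n by simp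
    next
      case False
      then show ?thesis
        using incident_to_full_type_correlation[OF \<alpha> \<open>Inl v \<in> Dgam_elems n\<close>]
          incident_to_full_type_edge[OF False n edge(2)] not_incident_to_full_type_vertex[OF False _ v]
          edge(1) n by simp
    qed
  qed
qed

locale Dgam_correlation =
  fixes n :: nat and \<alpha> :: "dgam_elem \<Rightarrow> dgam_elem"
  assumes n_gt_3: "n > 3"
    and correlation: "\<alpha> \<in> correlations (Dgam_elems n) (Dgam_inc n) (Dgam_type n)"
begin

lemma \<alpha>_in_Dgam_elems: "x \<in> Dgam_elems n \<Longrightarrow> \<alpha> x \<in> Dgam_elems n"
  using correlation_bij[OF correlation] by (auto simp: bij_betw_def)

lemma inj_on_\<alpha>: "inj_on \<alpha> (Dgam_elems n)"
  using correlation_bij[OF correlation] by (rule bij_betw_imp_inj_on)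

definition vperm :: "nat \<Rightarrow> nat" where
  "vperm v = projl (\<alpha> (Inl v))"

lemma \<alpha>_Inl: "v < n \<Longrightarrow> \<alpha> (Inl v) = Inl (vperm v)"
  and vperm_less: "v < n \<Longrightarrow> vperm v < n"
  by (auto simp: vperm_def elim: correlation_maps_vertex_to_vertex[OF n_gt_3 correlation])

lemma inj_on_vperm: "inj_on vperm {..<n}"
proof (rule inj_onI)
  fix v w assume "v \<in> {..<n}" "w \<in> {..<n}" "vperm v = vperm w"
  then have "\<alpha> (Inl v) = \<alpha> (Inl w)" "Inl v \<in> Dgam_elems n" "Inl w \<in> Dgam_elems n"
    by (simp_all add: \<alpha>_Inl)
  then show "v = w"
    using inj_onD[OF inj_on_\<alpha>] by blast
qed

lemma vperm_image: "vperm ` {..<n} = {..<n}"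
  using vperm_less by (intro endo_inj_surj inj_on_vperm) auto

lemma \<alpha>_Inr:
  assumes k: "k \<in> tau_bar n" and e: "e \<in> Eset n k"
  obtains k' where "\<alpha> (Inr (k, e)) = Inr (k', vperm ` e)" "k' \<in> tau_bar n" "vperm ` e \<in> Eset n k'"
proof -
  have x: "Inr (k, e) \<in> Dgam_elems n"
    using k e by simp
  from \<alpha>_in_Dgam_elems[OF x] show ?thesis
  proof (cases rule: Dgam_elems_cases)
    case (vertex w)
    then obtain v where "v < n" "\<alpha> (Inl v) = \<alpha> (Inr (k, e))"
      using vperm_image \<alpha>_Inl by (metis imageE lessThan_iff)
    then show ?thesis
      using inj_onD[OF inj_on_\<alpha>] x by fastforce
  next
    case (edge k' e')
    have "w \<in> e' \<longleftrightarrow> w \<in> vperm ` e" if "w < n" for w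
    proof -
      obtain v where v: "v < n" "w = vperm v"
        using \<open>w < n\<close> vperm_image by (metis imageE lessThan_iff)
      have "w \<in> e' \<longleftrightarrow> Dgam_inc n (\<alpha> (Inl v)) (\<alpha> (Inr (k, e)))"
        using v edge(1) by (simp add: \<alpha>_Inl)
      also have "\<dots> \<longleftrightarrow> v \<in> e"
        using correlation_inc_iff[OF correlation _ x, of "Inl v"] v by simp
      also have "\<dots> \<longleftrightarrow> w \<in> vperm ` e"
        using inj_on_image_mem_iff[OF inj_on_vperm _ Eset_subset[OF e]] v by simp
      finally show ?thesis .
    qed
    moreover have "e' \<subseteq> {..<n}" "vperm ` e \<subseteq> {..<n}"
      using Eset_subset[OF edge(3)] Eset_subset[OF e] vperm_less by auto
    ultimately have "e' = vperm ` e"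
      by blast
    then show ?thesis
      using that edge by simp
  qed
qed

lemma vperm_cycle_edges:
  obtains c where "c \<in> tau_bar n" "\<And>x. x < n \<Longrightarrow> vperm ` {x, (x + 1) mod n} \<in> Eset n c"
proof -
  have one: "1 \<in> tau_bar n"
    using n_gt_3 by (simp add: mem_tau_bar_iff)
  have edge: "{x, (x + 1) mod n} \<in> Eset n 1" if "x < n" for x
    using that by (auto simp: Eset_def)
  obtain c where c: "\<alpha> (Inr (1, {0, 1 mod n})) = Inr (c, vperm ` {0, 1 mod n})" "c \<in> tau_bar n"
    using \<alpha>_Inr[OF one edge[of 0]] n_gt_3 by auto
  have "vperm ` {x, (x + 1) mod n} \<in> Eset n c" if x: "x < n" for x
  proof -
    obtain k where k: "\<alpha> (Inr (1, {x, (x + 1) mod n})) = Inr (k, vperm ` {x, (x + 1) mod n})"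
      "vperm ` {x, (x + 1) mod n} \<in> Eset n k"
      using \<alpha>_Inr[OF one edge[OF x]] by blast
    have "Dgam_type n (\<alpha> (Inr (1, {x, (x + 1) mod n}))) = Dgam_type n (\<alpha> (Inr (1, {0, 1 mod n})))"
      using correlation_type_iff[OF correlation] one edge[OF x] edge[of 0] x by simp
    then have "k = c"
      using k(1) c(1) by simp
    then show ?thesis
      using k(2) by simp
  qed
  then show ?thesis
    using that c(2) by blast
qed

lemma vperm_mod_Suc_Suc_neq: "vperm (Suc (Suc x) mod n) \<noteq> vperm (x mod n)"
proof
  assume "vperm (Suc (Suc x) mod n) = vperm (x mod n)"
  then have "Suc (Suc x) mod n = x mod n"
    using inj_onD[OF inj_on_vperm] n_gt_3 by simp
  then have "[x + 2 = x + 0] (mod n)"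
    by (simp add: cong_def)
  then have "n dvd 2"
    by (simp only: cong_add_lcancel_nat cong_0_iff)
  then show False
    using n_gt_3 by (auto dest: dvd_imp_le)
qed

lemma vperm_affine:
  obtains a b where "a < n" "b < n" "coprime a n" "\<And>v. v < n \<Longrightarrow> vperm v = affine n a b v"
proof -
  obtain c where c: "c \<in> tau_bar n" "\<And>x. x < n \<Longrightarrow> vperm ` {x, (x + 1) mod n} \<in> Eset n c"
    using vperm_cycle_edges by blast
  define p where "p x = int (vperm (x mod n))" for x
  have steps: "pm_cong (int n) (p (Suc x) - p x) (int c)" for x
  proof -
    have "{vperm (x mod n), vperm (Suc x mod n)} \<in> Eset n c"
      using c(2)[of "x mod n"] n_gt_3 by (simp add: mod_Suc_eq)
    then show ?thesis
      by (simp add: p_def Eset_pm_cong)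
  qed
  have no_return: "\<not> [p (Suc (Suc x)) = p x] (mod int n)" for x
  proof
    assume "[p (Suc (Suc x)) = p x] (mod int n)"
    then have "[vperm (Suc (Suc x) mod n) = vperm (x mod n)] (mod n)"
      by (simp add: p_def cong_int_iff)
    then have "vperm (Suc (Suc x) mod n) = vperm (x mod n)"
      by (rule cong_less_modulus_unique_nat) (use n_gt_3 in \<open>simp_all add: vperm_less\<close>)
    with vperm_mod_Suc_Suc_neq show False ..
  qed
  define d where "d = p 1 - p 0"
  define a where "a = nat (d mod int n)"
  define b where "b = vperm 0"
  have a: "int a = d mod int n" "a < n"
    using n_gt_3 by (simp_all add: a_def nat_less_iff)
  have "pm_cong (int n) d (int c)"
    using steps[of 0] by (simp add: d_def)
  then have "coprime d (int n)"
    by (rule pm_cong_coprime) (use c(1) in \<open>simp add: mem_tau_bar_iff\<close>)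
  then have "coprime (int a) (int n)"
    using a(1) n_gt_3 by simp
  then have "coprime a n"
    by simp
  moreover have "vperm v = affine n a b v" if "v < n" for v
  proof -
    have "[int (vperm v) = int b + int v * d] (mod int n)"
      using pm_cong_steps_progression[where p = p, OF steps no_return, of v] that n_gt_3 by (simp add: p_def b_def d_def)
    also have "[int b + int v * d = int (a * v + b)] (mod int n)"
    proof -
      have "[int a = d] (mod int n)"
        using a(1) by (simp add: cong_def)
      then have "[int a * int v + int b = d * int v + int b] (mod int n)"
        by (intro cong_add cong_scalar_right cong_refl)
      then show ?thesis
        by (simp add: cong_sym_eq algebra_simps)
    qed
    finally have "[vperm v = a * v + b] (mod n)"
      by (simp only: cong_int_iff)
    then show ?thesis
      using vperm_less[OF that] n_gt_3 by (simp add: affine_def cong_def)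
  qed
  moreover have "b < n"
    using vperm_less n_gt_3 by (simp add: b_def)
  ultimately show ?thesis
    using that a(2) by blast
qed

lemma \<alpha>_eq_affine_corr:
  obtains a b where "a < n" "b < n" "coprime a n" "\<alpha> = affine_corr n a b"
proof -
  obtain a b where ab: "a < n" "b < n" "coprime a n" and vperm: "\<And>v. v < n \<Longrightarrow> vperm v = affine n a b v"
    using vperm_affine by blast
  have "\<alpha> x = affine_corr n a b x" for x
  proof (cases "x \<in> Dgam_elems n")
    case True
    then show ?thesis
    proof (cases rule: Dgam_elems_cases)
      case (vertex v)
      then show ?thesis
        by (simp add: \<alpha>_Inl vperm)
    next
      case (edge k e)
      obtain k' where k': "\<alpha> (Inr (k, e)) = Inr (k', vperm ` e)" "k' \<in> tau_bar n" "vperm ` e \<in> Eset n k'"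
        using \<alpha>_Inr[OF edge(2,3)] by blast
      have image: "vperm ` e = affine n a b ` e"
        using vperm Eset_subset[OF edge(3)] by (auto intro!: image_cong)
      have "coprime (a * k) n"
        using ab(3) edge(2) by (simp add: mem_tau_bar_iff)
      then have "edge_type n (a * k) \<in> tau_bar n"
        using n_gt_3 by (simp add: edge_type_in_tau_bar)
      moreover have "affine n a b ` e \<in> Eset n (edge_type n (a * k))"
        using n_gt_3 edge(3) by (simp add: affine_image_Eset)
      ultimately have "k' = edge_type n (a * k)"
        using Eset_type_unique k'(2,3) image by metis
      then show ?thesis
        using edge k'(1) image by simp
    qed
  next
    case False
    then show ?thesis
      by (simp add: extensional_arb[OF correlation_extensional[OF correlation]] affine_corr_def)
  qed
  then show ?thesis
    using that ab by blast
qed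

end

lemma correlation_eq_affine_corr:
  assumes "n > 3" "\<alpha> \<in> correlations (Dgam_elems n) (Dgam_inc n) (Dgam_type n)"
  obtains a b where "a < n" "b < n" "coprime a n" "\<alpha> = affine_corr n a b"
proof -
  interpret Dgam_correlation n \<alpha>
    using assms by unfold_locales
  show ?thesis
    using \<alpha>_eq_affine_corr that by blast
qed

section \<open>Automorphisms of the dihedral group as correlations\<close>

definition aut_corr :: "nat \<Rightarrow> (nat \<times> bool \<Rightarrow> nat \<times> bool) \<Rightarrow> dgam_elem \<Rightarrow> dgam_elem" where
  "aut_corr n \<psi> = affine_corr n (fst (\<psi> (1, False))) (fst (\<psi> (0, True)))"

lemma aut_corr_dihedral_aut: "n > 1 \<Longrightarrow> aut_corr n (dihedral_aut n a b) = affine_corr n a b"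
  by (simp add: aut_corr_def dihedral_aut_apply affine_corr_mod)

lemma aut_corr_in_correlations:
  assumes n: "n \<ge> 3" and \<psi>: "\<psi> \<in> auto (dihedral n)"
  shows "aut_corr n \<psi> \<in> correlations (Dgam_elems n) (Dgam_inc n) (Dgam_type n)"
proof -
  obtain a b where "coprime a n" "\<psi> = dihedral_aut n a b"
    using auto_dihedral_eq_dihedral_aut[OF n \<psi>] by blast
  then show ?thesis
    using n by (simp add: aut_corr_dihedral_aut affine_corr_in_correlations)
qed

lemma aut_corr_compose:
  assumes n: "n \<ge> 3" and \<psi>: "\<psi> \<in> auto (dihedral n)" and \<psi>': "\<psi>' \<in> auto (dihedral n)"
  shows "aut_corr n (compose (carrier (dihedral n)) \<psi> \<psi>') =
    compose (Dgam_elems n) (aut_corr n \<psi>) (aut_corr n \<psi>')"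
proof -
  obtain a b where ab: "\<psi> = dihedral_aut n a b"
    using auto_dihedral_eq_dihedral_aut[OF n \<psi>] by blast
  obtain a' b' where a'b': "coprime a' n" "\<psi>' = dihedral_aut n a' b'"
    using auto_dihedral_eq_dihedral_aut[OF n \<psi>'] by blast
  show ?thesis
    using n ab a'b' by (simp add: compose_dihedral_aut aut_corr_dihedral_aut affine_corr_compose)
qed

lemma aut_corr_hom_AutoGroup:
  assumes n: "n \<ge> 3"
  shows "aut_corr n \<in> hom (AutoGroup (dihedral n)) (CorrGroup (Dgam_elems n) (Dgam_inc n) (Dgam_type n))"
  unfolding AutoGroup_def CorrGroup_def
  using aut_corr_in_correlations[OF n] aut_corr_compose[OF n]
  by (intro hom_BijGroup_restrictI) (auto simp: auto_def correlations_def)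

lemma inj_on_aut_corr:
  assumes n: "n \<ge> 3"
  shows "inj_on (aut_corr n) (auto (dihedral n))"
proof (rule inj_onI)
  fix \<psi> \<psi>' assume \<psi>: "\<psi> \<in> auto (dihedral n)" and \<psi>': "\<psi>' \<in> auto (dihedral n)"
    and eq: "aut_corr n \<psi> = aut_corr n \<psi>'"
  obtain a b where ab: "a < n" "b < n" "\<psi> = dihedral_aut n a b"
    using auto_dihedral_eq_dihedral_aut[OF n \<psi>] by blast
  obtain a' b' where a'b': "a' < n" "b' < n" "\<psi>' = dihedral_aut n a' b'"
    using auto_dihedral_eq_dihedral_aut[OF n \<psi>'] by blast
  have corr_eq: "affine_corr n a b = affine_corr n a' b'"
    using eq ab a'b' n by (simp add: aut_corr_dihedral_aut)
  have "b = b'"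
    using fun_cong[OF corr_eq, of "Inl 0"] ab a'b' n by (simp add: affine_def)
  moreover have "a = a'"
  proof -
    have "(a + b) mod n = (a' + b) mod n"
      using fun_cong[OF corr_eq, of "Inl 1"] \<open>b = b'\<close> n by (simp add: affine_def)
    then show ?thesis
      using ab a'b' by (simp add: cong_add_rcancel_nat cong_less_modulus_unique_nat flip: cong_def)
  qed
  ultimately show "\<psi> = \<psi>'"
    using ab a'b' by simp
qed

lemma aut_corr_image_auto:
  assumes n: "n > 3"
  shows "aut_corr n ` auto (dihedral n) = correlations (Dgam_elems n) (Dgam_inc n) (Dgam_type n)"
proof
  show "aut_corr n ` auto (dihedral n) \<subseteq> correlations (Dgam_elems n) (Dgam_inc n) (Dgam_type n)"
    using aut_corr_in_correlations n by auto
  show "correlations (Dgam_elems n) (Dgam_inc n) (Dgam_type n) \<subseteq> aut_corr n ` auto (dihedral n)"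
  proof
    fix \<alpha> assume "\<alpha> \<in> correlations (Dgam_elems n) (Dgam_inc n) (Dgam_type n)"
    then obtain a b where "coprime a n" "\<alpha> = affine_corr n a b"
      using correlation_eq_affine_corr[OF n] by blast
    then show "\<alpha> \<in> aut_corr n ` auto (dihedral n)"
      using n dihedral_aut_in_auto aut_corr_dihedral_aut
      by (intro image_eqI[of _ _ "dihedral_aut n a b"]) simp_all
  qed
qed

lemma aut_corr_iso_AutoGroup:
  assumes n: "n > 3"
  shows "aut_corr n \<in> iso (AutoGroup (dihedral n)) (CorrGroup (Dgam_elems n) (Dgam_inc n) (Dgam_type n))"
  using n aut_corr_hom_AutoGroup inj_on_aut_corr aut_corr_image_auto
  by (simp add: iso_def bij_betw_def AutoGroup_def CorrGroup_def)

lemma inner_auts_subset_auto: "n > 0 \<Longrightarrow> inner_auts (dihedral n) \<subseteq> auto (dihedral n)"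
  unfolding inner_auts_def using group.conjugation_in_auto[OF group_dihedral] by blast

lemma inj_on_aut_corr_inner_auts:
  assumes n: "n \<ge> 3"
  shows "inj_on (aut_corr n) (inner_auts (dihedral n))"
  using inj_on_aut_corr[OF n] by (rule inj_on_subset) (use n inner_auts_subset_auto in simp)

lemma aut_corr_inner_aut_type_preserving:
  assumes n: "n \<ge> 3" and \<psi>: "\<psi> \<in> inner_auts (dihedral n)"
  shows "aut_corr n \<psi> \<in> carrier (TypePresGroup (Dgam_elems n) (Dgam_inc n) (Dgam_type n))"
proof -
  obtain r s where "r < n"
    and "\<psi> = (\<lambda>x\<in>carrier (dihedral n). (r, s) \<otimes>\<^bsub>dihedral n\<^esub> x \<otimes>\<^bsub>dihedral n\<^esub> inv\<^bsub>dihedral n\<^esub> (r, s))"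
    using \<psi> by (auto simp: inner_auts_def carrier_dihedral)
  then have \<psi>_corr: "aut_corr n \<psi> = affine_corr n (if s then n - 1 else 1) ((2 * r) mod n)"
    using n by (simp add: conjugation_dihedral aut_corr_dihedral_aut)
  have "even n \<longrightarrow> even ((2 * r) mod n)"
    using dvd_mod[of 2 "2 * r" n] by simp
  moreover have "\<psi> \<in> auto (dihedral n)"
    using inner_auts_subset_auto[of n] \<psi> n by auto
  then have "aut_corr n \<psi> \<in> correlations (Dgam_elems n) (Dgam_inc n) (Dgam_type n)"
    by (rule aut_corr_in_correlations[OF n])
  ultimately show ?thesis
    using affine_corr_type_preserving[OF n] \<psi>_corr by (simp add: TypePresGroup_def)
qed

lemma type_preserving_in_aut_corr_image:
  assumes n: "n > 3"
    and \<alpha>: "\<alpha> \<in> carrier (TypePresGroup (Dgam_elems n) (Dgam_inc n) (Dgam_type n))"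
  shows "\<alpha> \<in> aut_corr n ` inner_auts (dihedral n)"
proof -
  have "\<alpha> \<in> correlations (Dgam_elems n) (Dgam_inc n) (Dgam_type n)"
    using \<alpha> by (simp add: TypePresGroup_def)
  then obtain a b where ab: "a < n" "b < n" "\<alpha> = affine_corr n a b"
    using correlation_eq_affine_corr[OF n] by blast
  then have params: "(a = 1 \<or> a = n - 1) \<and> (even n \<longrightarrow> even b)"
    using \<alpha> n type_preserving_affine_corr_params[of n a b] by (simp add: TypePresGroup_def)
  define r where "r = (if even b then b div 2 else (b + n) div 2)"
  define s where "s = (a \<noteq> 1)"
  have "2 * r = b \<or> 2 * r = b + n"
    using params by (auto simp: r_def)
  then have r: "r < n" "(2 * r) mod n = b"
    using ab by auto
  have a: "(if s then n - 1 else 1) = a"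
    using params by (auto simp: s_def)
  let ?conj = "\<lambda>x\<in>carrier (dihedral n). (r, s) \<otimes>\<^bsub>dihedral n\<^esub> x \<otimes>\<^bsub>dihedral n\<^esub> inv\<^bsub>dihedral n\<^esub> (r, s)"
  have "?conj \<in> inner_auts (dihedral n)"
    using r by (auto simp: inner_auts_def carrier_dihedral)
  moreover have "aut_corr n ?conj = \<alpha>"
    using n r a ab by (simp add: conjugation_dihedral aut_corr_dihedral_aut)
  ultimately show ?thesis
    by blast
qed

lemma aut_corr_hom_InnGroup:
  assumes n: "n \<ge> 3"
  shows "aut_corr n \<in> hom (InnGroup (dihedral n)) (TypePresGroup (Dgam_elems n) (Dgam_inc n) (Dgam_type n))"
proof -
  have "aut_corr n \<in> inner_auts (dihedral n) \<rightarrow> carrier (TypePresGroup (Dgam_elems n) (Dgam_inc n) (Dgam_type n))"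
    using aut_corr_inner_aut_type_preserving[OF n] by blast
  moreover have "inner_auts (dihedral n) \<subseteq> auto (dihedral n)"
    using n by (simp add: inner_auts_subset_auto)
  ultimately show ?thesis
    unfolding InnGroup_def TypePresGroup_def
  proof (intro hom_BijGroup_restrictI)
    show "inner_auts (dihedral n) \<subseteq> Bij (carrier (dihedral n))"
      using \<open>inner_auts (dihedral n) \<subseteq> auto (dihedral n)\<close> by (auto simp: auto_def)
    fix \<psi> \<psi>' assume "\<psi> \<in> inner_auts (dihedral n)" "\<psi>' \<in> inner_auts (dihedral n)"
    then show "aut_corr n (compose (carrier (dihedral n)) \<psi> \<psi>') =
        compose (Dgam_elems n) (aut_corr n \<psi>) (aut_corr n \<psi>')"
      using \<open>inner_auts (dihedral n) \<subseteq> auto (dihedral n)\<close> aut_corr_compose[OF n] by blast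
  qed (auto simp: correlations_def)
qed

lemma aut_corr_iso_InnGroup:
  assumes n: "n > 3"
  shows "aut_corr n \<in> iso (InnGroup (dihedral n)) (TypePresGroup (Dgam_elems n) (Dgam_inc n) (Dgam_type n))"
proof -
  have "aut_corr n ` inner_auts (dihedral n) = carrier (TypePresGroup (Dgam_elems n) (Dgam_inc n) (Dgam_type n))"
    using n aut_corr_inner_aut_type_preserving type_preserving_in_aut_corr_image by fastforce
  then show ?thesis
    using n aut_corr_hom_InnGroup inj_on_aut_corr_inner_auts by (simp add: iso_def bij_betw_def InnGroup_def)
qed

theorem mainTheorem1:
  fixes n :: nat
  assumes "n \<ge> 3"
  shows "(n > 3 \<longrightarrow> igr_group (dihedral n) (Dgam_elems n) (Dgam_inc n) (Dgam_type n) (Dgam_types n))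
       \<and> (n = 3 \<longrightarrow> weak_igr_group (dihedral n) (Dgam_elems n) (Dgam_inc n) (Dgam_type n) (Dgam_types n))"
proof (intro conjI impI)
  have system: "incidence_system (Dgam_elems n) (Dgam_inc n) (Dgam_type n) (Dgam_types n)"
    using assms by (intro incidence_system_Dgam) simp
  show "igr_group (dihedral n) (Dgam_elems n) (Dgam_inc n) (Dgam_type n) (Dgam_types n)" if "n > 3"
    unfolding igr_group_def igr_def
    using system aut_corr_iso_InnGroup[OF that] aut_corr_iso_AutoGroup[OF that] by blast
  show "weak_igr_group (dihedral n) (Dgam_elems n) (Dgam_inc n) (Dgam_type n) (Dgam_types n)"
    unfolding weak_igr_group_def weak_igr_def
    using system aut_corr_hom_InnGroup[OF assms] aut_corr_hom_AutoGroup[OF assms]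
      inj_on_aut_corr_inner_auts[OF assms] inj_on_aut_corr[OF assms]
    by (auto simp: InnGroup_def AutoGroup_def)
qed

end
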